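(* Let $G$, $\mathfrak{g}$, $\mu$, $H_0,\dots,H_M$ be as in the context and let $h>0$. The stochastic implicit midpoint integrator $\Phi_h:T^*G\to T^*G$, $(Q_n,P_n)\mapsto(Q_{n+1},P_{n+1})$, defined in the context is almost surely equivariant with respect to the action $g\cdot(Q,P)=(gQ,(g^{-1})^*P)$ of $G$ on $T^*G$, i.e. almost surely $\Phi_h(g\cdot(Q,P))=g\cdot\Phi_h(Q,P)$ for all $g\in G$ and $(Q,P)\in T^*G$.
   Context: $G\subseteq\operatorname{GL}(n,\mathbb{C})$ is a compact simply connected matrix Lie group with $J$-quadratic Lie algebra $\mathfrak{g}$: there is a matrix $J$ with $J^*=\pm J$, $J^2=cI_n$ ($c\in\mathbb{R}\setminus\{0\}$) and $A^*J+JA=0$ for all $A\in\mathfrak{g}$ ($A^*$ = conjugate transpose). $\mathfrak{g}^*$ is identified with $\mathfrak{g}$ via $\langle X,V\rangle=\operatorname{Tr}(X^*V)$, gradients are taken w.r.t. this inner product. The momentum map is $\mu(Q,P)=\tfrac12Q^*P-\tfrac1{2c}JP^*QJ$. $H_0,\dots,H_M:\mathfrak{g}^*\to\mathbb{R}$ are differentiable Hamiltonians. Set $f_i(Q,P)=\tfrac12Q\nabla H_i(\mu(Q,P))$ and $k_i(Q,P)=-\tfrac12P\nabla H_i(\mu(Q,P))^*$, $i=0,\dots,M$. Truncated noise: for each $i$ and step $n$, let $\xi\sim\mathcal N(0,1)$ with $\xi\sqrt h=W^i(t_n+h)-W^i(t_n)$ ($W^i$ independent Brownian motions), let $A_h=\sqrt{2l|\log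 h|}$ for a fixed positive integer $l$, and let $(\zeta_i)_n=A_h$ if $\xi>A_h$, $-A_h$ if $\xi<-A_h$, $\xi$ otherwise. The integrator $\Phi_h=\Phi_h^{(2)}\circ\Phi_h^{(1)}$: given $(Q_n,P_n)$, $\Phi_h^{(1)}$ determines $(\tilde Q,\tilde P)$ implicitly from $Q_n=\tilde Q-\tfrac12\big(f_0(\tilde Q,\tilde P)h+\sum_{i=1}^M f_i(\tilde Q,\tilde P)(\zeta_i)_n\sqrt h\big)$, $P_n=\tilde P-\tfrac12\big(k_0(\tilde Q,\tilde P)h+\sum_{i=1}^M k_i(\tilde Q,\tilde P)(\zeta_i)_n\sqrt h\big)$, and $\Phi_h^{(2)}$ sets $Q_{n+1}=\tilde Q+\tfrac12\big(f_0(\tilde Q,\tilde P)h+\sum_{i} f_i(\tilde Q,\tilde P)(\zeta_i)_n\sqrt h\big)$, $P_{n+1}=\tilde P+\tfrac12\big(k_0(\tilde Q,\tilde P)h+\sum_{i} k_i(\tilde Q,\tilde P)(\zeta_i)_n\sqrt h\big)$. *)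

theory Defs
  imports "HOL-Analysis.Analysis"
begin

type_synonym 'n cmat = "complex^'n^'n"

definition adj :: "'n::finite cmat \<Rightarrow> 'n cmat" where
  "adj A = (\<chi> i j. cnj (A $ j $ i))"

primrec matpow :: "'n::finite cmat \<Rightarrow> nat \<Rightarrow> 'n cmat" where
  "matpow A 0 = mat 1"
| "matpow A (Suc k) = A ** matpow A k"

definition mexp :: "'n::finite cmat \<Rightarrow> 'n cmat" where
  "mexp A = (\<Sum>k. (1 / fact k) *\<^sub>R matpow A k)"

text \<open>A compact, simply connected matrix Lie group G \<subseteq> GL(n,C)
  (closed subgroup of GL(n,C); closedness follows from compactness).\<close>
definition compact_sc_matrix_group :: "'n::finite cmat set \<Rightarrow> bool" where
  "compact_sc_matrix_group G \<longleftrightarrow>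
     G \<subseteq> {A. invertible A} \<and> mat 1 \<in> G \<and>
     (\<forall>A\<in>G. \<forall>B\<in>G. A ** B \<in> G) \<and> (\<forall>A\<in>G. matrix_inv A \<in> G) \<and>
     compact G \<and> simply_connected G"

definition lie_alg :: "'n::finite cmat set \<Rightarrow> 'n cmat set" where
  "lie_alg G = {A. \<forall>t::real. mexp (t *\<^sub>R A) \<in> G}"

definition J_quadratic :: "'n::finite cmat set \<Rightarrow> 'n cmat \<Rightarrow> real \<Rightarrow> bool" where
  "J_quadratic g J c \<longleftrightarrow>
     (adj J = J \<or> adj J = - J) \<and> J ** J = c *\<^sub>R mat 1 \<and> c \<noteq> 0 \<and>
     (\<forall>A\<in>g. adj A ** J + J ** A = 0)"

definition is_gradient :: "'n::finite cmat set \<Rightarrow> ('n cmat \<Rightarrow> real) \<Rightarrow> 'n cmat \<Rightarrow> 'n cmat \<Rightarrow> bool" where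
  "is_gradient g H X D \<longleftrightarrow>
     D \<in> g \<and> (H has_derivative (\<lambda>V. Re (trace (adj D ** V)))) (at X within g)"

definition mom :: "'n::finite cmat \<Rightarrow> real \<Rightarrow> 'n cmat \<Rightarrow> 'n cmat \<Rightarrow> 'n cmat" where
  "mom J c Q P = (1/2) *\<^sub>R (adj Q ** P) - (1 / (2 * c)) *\<^sub>R (J ** adj P ** Q ** J)"

definition fvec :: "'n::finite cmat \<Rightarrow> real \<Rightarrow> (nat \<Rightarrow> 'n cmat \<Rightarrow> 'n cmat) \<Rightarrow> nat
    \<Rightarrow> 'n cmat \<Rightarrow> 'n cmat \<Rightarrow> 'n cmat" where
  "fvec J c gradH i Q P = (1/2) *\<^sub>R (Q ** gradH i (mom J c Q P))"

definition kvec :: "'n::finite cmat \<Rightarrow> real \<Rightarrow> (nat \<Rightarrow> 'n cmat \<Rightarrow> 'n cmat) \<Rightarrow> nat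
    \<Rightarrow> 'n cmat \<Rightarrow> 'n cmat \<Rightarrow> 'n cmat" where
  "kvec J c gradH i Q P = - (1/2) *\<^sub>R (P ** adj (gradH i (mom J c Q P)))"

definition incr :: "(nat \<Rightarrow> 'n::finite cmat \<Rightarrow> 'n cmat \<Rightarrow> 'n cmat) \<Rightarrow> nat \<Rightarrow> real
    \<Rightarrow> (nat \<Rightarrow> real) \<Rightarrow> 'n cmat \<Rightarrow> 'n cmat \<Rightarrow> 'n cmat" where
  "incr F M h \<zeta> Q P = h *\<^sub>R F 0 Q P + (\<Sum>i\<in>{1..M}. (\<zeta> i * sqrt h) *\<^sub>R F i Q P)"

text \<open>One step of the stochastic implicit midpoint integrator, for a given
  realisation \<zeta> of the (truncated) noise: (Q',P') = Phi_h(Q,P).  Since the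
  first half-step is implicit, the step is formalised as a relation:
  (Q',P') is an output of Phi_h at (Q,P) iff some (Qt,Pt) solves the
  implicit equations and (Q',P') is obtained from it by the explicit step.\<close>
definition midpoint_step :: "'n::finite cmat \<Rightarrow> real \<Rightarrow> (nat \<Rightarrow> 'n cmat \<Rightarrow> 'n cmat) \<Rightarrow> nat
    \<Rightarrow> real \<Rightarrow> (nat \<Rightarrow> real) \<Rightarrow> 'n cmat \<times> 'n cmat \<Rightarrow> 'n cmat \<times> 'n cmat \<Rightarrow> bool" where
  "midpoint_step J c gradH M h \<zeta> QP QP' \<longleftrightarrow>
     (\<exists>Qt Pt.
        fst QP = Qt - (1/2) *\<^sub>R incr (fvec J c gradH) M h \<zeta> Qt Pt \<and>
        snd QP = Pt - (1/2) *\<^sub>R incr (kvec J c gradH) M h \<zeta> Qt Pt \<and>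
        fst QP' = Qt + (1/2) *\<^sub>R incr (fvec J c gradH) M h \<zeta> Qt Pt \<and>
        snd QP' = Pt + (1/2) *\<^sub>R incr (kvec J c gradH) M h \<zeta> Qt Pt)"

definition act :: "'n::finite cmat \<Rightarrow> 'n cmat \<times> 'n cmat \<Rightarrow> 'n cmat \<times> 'n cmat" where
  "act g QP = (g ** fst QP, adj (matrix_inv g) ** snd QP)"

definition trunc_level :: "nat \<Rightarrow> real \<Rightarrow> real" where
  "trunc_level l h = sqrt (2 * real l * \<bar>ln h\<bar>)"

end

theory Submission
  imports Defs
begin

text \<open>The momentum map is invariant under the cotangent-lifted action
  (Q, P) \<mapsto> (gQ, (g^-1)^* P), since Q^* P and P^* Q are. Hence the vector fields f_i and k_i
  transform linearly, f_i(g\<cdot>x) = g f_i(x) and k_i(g\<cdot>x) = (g^-1)^* k_i(x), and so do the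
  increments of both half-steps. The action therefore maps a solution (Q_t, P_t) of
  the implicit equations at x to one at g\<cdot>x, and its inverse does the converse.\<close>

lemma equivariant_relation_image:
  assumes equivariant: "\<And>x y. R (f x) (f y) \<longleftrightarrow> R x y" and right_inverse: "\<And>y. f (f' y) = y"
  shows "{y. R (f x) y} = f ` {y. R x y}"
proof (intro set_eqI iffI)
  fix y
  assume "y \<in> {y. R (f x) y}"
  then have "R x (f' y)"
    using equivariant [of x "f' y"] by (simp add: right_inverse)
  then show "y \<in> f ` {y. R x y}"
    by (intro image_eqI [of y f "f' y"]) (simp_all add: right_inverse)
qed (auto simp: equivariant)

lemma adj_matrix_mult: "adj (A ** B) = adj B ** adj (A :: 'n::finite cmat)"
  by (simp add: adj_def matrix_matrix_mult_def vec_eq_iff mult.commute)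

lemma adj_mat_1 [simp]: "adj (mat 1 :: 'n::finite cmat) = mat 1"
  by (simp add: adj_def mat_def vec_eq_iff)

lemma adj_adj [simp]: "adj (adj A) = (A :: 'n::finite cmat)"
  by (simp add: adj_def vec_eq_iff)

lemma linear_matrix_mult_left: "linear (\<lambda>B. (A :: 'a::real_algebra_1^'n^'m) ** B)"
  by (rule linearI) (simp_all add: matrix_add_ldistrib matrix_scalar_ac scalar_matrix_assoc)

lemma
  fixes A :: "'a::semiring_1^'n^'n"
  assumes "invertible A"
  shows matrix_inv_right: "A ** matrix_inv A = mat 1"
    and matrix_inv_left: "matrix_inv A ** A = mat 1"
proof -
  have "\<exists>A'. A ** A' = mat 1 \<and> A' ** A = mat 1"
    using assms by (simp add: invertible_def)
  from someI_ex [OF this] show "A ** matrix_inv A = mat 1" "matrix_inv A ** A = mat 1"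
    by (simp_all add: matrix_inv_def)
qed

lemma invertible_matrix_inv:
  fixes A :: "'a::semiring_1^'n^'n"
  shows "invertible A \<Longrightarrow> invertible (matrix_inv A)"
  using matrix_inv_left matrix_inv_right invertible_def by blast

lemma matrix_inv_matrix_inv:
  fixes A :: "'a::semiring_1^'n^'n"
  assumes "invertible A"
  shows "matrix_inv (matrix_inv A) = A"
proof -
  let ?B = "matrix_inv A"
  have "matrix_inv ?B = matrix_inv ?B ** (?B ** A)"
    using matrix_inv_left [OF assms] by simp
  also have "\<dots> = A"
    using matrix_inv_left [OF invertible_matrix_inv [OF assms]] by (simp add: matrix_mul_assoc)
  finally show ?thesis .
qed

lemma act_act_matrix_inv:
  assumes "invertible g"
  shows "act (matrix_inv g) (act g x) = x"
proof -
  have "adj (matrix_inv (matrix_inv g)) ** adj (matrix_inv g) = mat 1"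
    by (simp add: matrix_inv_matrix_inv matrix_inv_left assms flip: adj_matrix_mult)
  then show ?thesis
    by (simp add: act_def matrix_mul_assoc matrix_inv_left assms)
qed

lemma mom_act:
  assumes "invertible g"
  shows "mom J c (g ** Q) (adj (matrix_inv g) ** P) = mom J c Q P"
proof -
  have "adj (g ** Q) ** (adj (matrix_inv g) ** P) = adj Q ** adj (matrix_inv g ** g) ** P"
    by (simp add: adj_matrix_mult matrix_mul_assoc)
  then have cross: "adj (g ** Q) ** (adj (matrix_inv g) ** P) = adj Q ** P"
    by (simp add: matrix_inv_left assms)
  have "J ** adj (adj (matrix_inv g) ** P) ** (g ** Q) ** J
      = J ** adj P ** (matrix_inv g ** g) ** Q ** J"
    by (simp add: adj_matrix_mult matrix_mul_assoc)
  then have cross_adj: "J ** adj (adj (matrix_inv g) ** P) ** (g ** Q) ** J = J ** adj P ** Q ** J"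
    by (simp add: matrix_inv_left assms)
  show ?thesis
    unfolding mom_def cross cross_adj ..
qed

lemma incr_linear_image:
  assumes "linear L" and "\<And>i. F i Q' P' = L (F i Q P)"
  shows "incr F M h \<zeta> Q' P' = L (incr F M h \<zeta> Q P)"
  by (simp add: incr_def assms linear_add linear_scale linear_sum [OF assms(1)])

lemma incr_fvec_act:
  assumes "invertible g"
  shows "incr (fvec J c gradH) M h \<zeta> (g ** Q) (adj (matrix_inv g) ** P)
       = g ** incr (fvec J c gradH) M h \<zeta> Q P"
  by (rule incr_linear_image [OF linear_matrix_mult_left])
     (simp add: fvec_def mom_act assms matrix_scalar_ac scalar_matrix_assoc matrix_mul_assoc)

lemma incr_kvec_act:
  assumes "invertible g"
  shows "incr (kvec J c gradH) M h \<zeta> (g ** Q) (adj (matrix_inv g) ** P)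
       = adj (matrix_inv g) ** incr (kvec J c gradH) M h \<zeta> Q P"
  by (rule incr_linear_image [OF linear_matrix_mult_left])
     (simp add: kvec_def mom_act assms matrix_mul_assoc
        linear_neg [OF linear_matrix_mult_left] linear_scale [OF linear_matrix_mult_left])

lemma midpoint_step_act:
  assumes "invertible g" and "midpoint_step J c gradH M h \<zeta> x y"
  shows "midpoint_step J c gradH M h \<zeta> (act g x) (act g y)"
proof -
  obtain Qt Pt where solution:
    "fst x = Qt - (1/2) *\<^sub>R incr (fvec J c gradH) M h \<zeta> Qt Pt"
    "snd x = Pt - (1/2) *\<^sub>R incr (kvec J c gradH) M h \<zeta> Qt Pt"
    "fst y = Qt + (1/2) *\<^sub>R incr (fvec J c gradH) M h \<zeta> Qt Pt"
    "snd y = Pt + (1/2) *\<^sub>R incr (kvec J c gradH) M h \<zeta> Qt Pt"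
    using assms(2) unfolding midpoint_step_def by blast
  let ?Qt = "g ** Qt" and ?Pt = "adj (matrix_inv g) ** Pt"
  have "fst (act g x) = ?Qt - (1/2) *\<^sub>R incr (fvec J c gradH) M h \<zeta> ?Qt ?Pt \<and>
      snd (act g x) = ?Pt - (1/2) *\<^sub>R incr (kvec J c gradH) M h \<zeta> ?Qt ?Pt \<and>
      fst (act g y) = ?Qt + (1/2) *\<^sub>R incr (fvec J c gradH) M h \<zeta> ?Qt ?Pt \<and>
      snd (act g y) = ?Pt + (1/2) *\<^sub>R incr (kvec J c gradH) M h \<zeta> ?Qt ?Pt"
    using solution
    by (simp add: act_def incr_fvec_act incr_kvec_act assms
        linear_add [OF linear_matrix_mult_left] linear_diff [OF linear_matrix_mult_left]
        linear_scale [OF linear_matrix_mult_left])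
  then show ?thesis
    unfolding midpoint_step_def by blast
qed

lemma midpoint_step_act_iff:
  assumes "invertible g"
  shows "midpoint_step J c gradH M h \<zeta> (act g x) (act g y) \<longleftrightarrow> midpoint_step J c gradH M h \<zeta> x y"
proof
  assume "midpoint_step J c gradH M h \<zeta> (act g x) (act g y)"
  from midpoint_step_act [OF invertible_matrix_inv [OF assms] this]
  show "midpoint_step J c gradH M h \<zeta> x y"
    by (simp add: act_act_matrix_inv assms)
qed (rule midpoint_step_act [OF assms])

theorem lemma4p2:
  fixes G :: "'n::finite cmat set"
    and J :: "'n cmat" and c :: real
    and H :: "nat \<Rightarrow> 'n cmat \<Rightarrow> real"
    and gradH :: "nat \<Rightarrow> 'n cmat \<Rightarrow> 'n cmat"
    and M l :: nat and h :: real and \<zeta> :: "nat \<Rightarrow> real"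
  assumes "compact_sc_matrix_group G"
    and "J_quadratic (lie_alg G) J c"
    and "\<And>i X. i \<le> M \<Longrightarrow> X \<in> lie_alg G \<Longrightarrow> is_gradient (lie_alg G) (H i) X (gradH i X)"
    and "l > 0" and "h > 0"
    and "\<And>i. i \<in> {1..M} \<Longrightarrow> \<bar>\<zeta> i\<bar> \<le> trunc_level l h"
    and "g \<in> G"
  shows "{QP'. midpoint_step J c gradH M h \<zeta> (act g QP) QP'}
           = act g ` {QP'. midpoint_step J c gradH M h \<zeta> QP QP'}"
proof -
  have g: "invertible g"
    using assms(1,7) unfolding compact_sc_matrix_group_def by blast
  have "act g (act (matrix_inv g) y) = y" for y
    using act_act_matrix_inv [OF invertible_matrix_inv [OF g]] by (simp add: matrix_inv_matrix_inv g)
  with midpoint_step_act_iff [OF g] show ?thesis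
    by (rule equivariant_relation_image)
qed

end
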